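(* Let $I$ be an ideal of a commutative ring $A$ and let $b\in A$ be such that $b^n\in I^n$ for all sufficiently large positive integers $n$. Then $b\in{}^*I$.
   Context: For an ideal $I$ of $A$, an element $b\in A$ is weakly subintegral over $I$ if there exist $q\in\mathbb{N}$ and elements $a_i\in I^i$ ($1\le i\le 2q+1$) such that $b^n+\sum_{i=1}^n\binom{n}{i}a_ib^{n-i}=0$ for all $n$ with $q+1\le n\le 2q+1$. The weak subintegral closure ${}^*I$ of $I$ is the set of elements of $A$ weakly subintegral over $I$. *)

theory Defs
  imports Main
begin

definition is_ideal :: "'a::comm_ring_1 set \<Rightarrow> bool" where
  "is_ideal I \<longleftrightarrow> 0 \<in> I \<and> (\<forall>x\<in>I. \<forall>y\<in>I. x + y \<in> I) \<and> (\<forall>r x. x \<in> I \<longrightarrow> r * x \<in> I)"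

inductive_set ideal_prod :: "'a::comm_ring_1 set \<Rightarrow> 'a set \<Rightarrow> 'a set" for I J where
  zero: "0 \<in> ideal_prod I J"
| mult: "x \<in> I \<Longrightarrow> y \<in> J \<Longrightarrow> x * y \<in> ideal_prod I J"
| add: "u \<in> ideal_prod I J \<Longrightarrow> v \<in> ideal_prod I J \<Longrightarrow> u + v \<in> ideal_prod I J"

primrec ideal_power :: "'a::comm_ring_1 set \<Rightarrow> nat \<Rightarrow> 'a set" where
  "ideal_power I 0 = UNIV"
| "ideal_power I (Suc n) = ideal_prod I (ideal_power I n)"

definition weakly_subintegral :: "'a::comm_ring_1 set \<Rightarrow> 'a \<Rightarrow> bool" where
  "weakly_subintegral I b \<longleftrightarrow>
     (\<exists>q::nat. q \<ge> 1 \<and> (\<exists>a::nat \<Rightarrow> 'a.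
        (\<forall>i\<in>{1..2*q+1}. a i \<in> ideal_power I i) \<and>
        (\<forall>n\<in>{q+1..2*q+1}.
           b ^ n + (\<Sum>i=1..n. of_nat (n choose i) * a i * b ^ (n - i)) = 0)))"

definition weak_subintegral_closure :: "'a::comm_ring_1 set \<Rightarrow> 'a set" where
  "weak_subintegral_closure I = {b. weakly_subintegral I b}"

end

theory Submission
  imports Defs
begin

text \<open>
  Choose integers \<open>c\<^sub>0 = 1\<close>, \<open>c\<^sub>1 = \<dots> = c\<^sub>q = 0\<close> and, recursively, \<open>c\<^sub>n\<close> for \<open>n > q\<close>
  such that \<open>\<Sum>\<^sub>i\<^sub>\<le>\<^sub>n (n choose i) c\<^sub>i = 0\<close>. With \<open>a\<^sub>i = c\<^sub>i b\<^sup>i\<close> the defining equations of weak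
  subintegrality become \<open>(\<Sum>\<^sub>i\<^sub>\<le>\<^sub>n (n choose i) c\<^sub>i) b\<^sup>n = 0\<close>, and \<open>a\<^sub>i \<in> I\<^sup>i\<close> holds because
  \<open>a\<^sub>i = 0\<close> for \<open>i \<le> q\<close> while \<open>b\<^sup>i \<in> I\<^sup>i\<close> for \<open>i > q\<close> once \<open>q\<close> exceeds the threshold.
\<close>

lemma ideal_prod_mult_left:
  assumes "is_ideal I" "u \<in> ideal_prod I J"
  shows "r * u \<in> ideal_prod I J"
  using assms(2)
proof induction
  case zero
  then show ?case by (simp add: ideal_prod.zero)
next
  case (mult x y)
  have "r * x \<in> I" using assms(1) mult(1) unfolding is_ideal_def by blast
  then have "(r * x) * y \<in> ideal_prod I J" using mult(2) by (rule ideal_prod.mult)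
  then show ?case by (simp add: mult.assoc)
next
  case (add u v)
  then show ?case by (simp add: distrib_left ideal_prod.add)
qed

lemma ideal_power_mult_left:
  assumes "is_ideal I" "u \<in> ideal_power I n"
  shows "r * u \<in> ideal_power I n"
  using assms by (cases n) (auto intro: ideal_prod_mult_left)

lemma zero_in_ideal_power: "0 \<in> ideal_power I n"
  by (cases n) (auto intro: ideal_prod.zero)

lemma sum_binomial_scaled_powers:
  fixes b :: "'a::comm_ring_1"
  shows "(\<Sum>i\<le>n. of_nat (n choose i) * (of_int (c i) * b ^ i) * b ^ (n - i))
       = of_int (\<Sum>i\<le>n. int (n choose i) * c i) * b ^ n"
  unfolding of_int_sum sum_distrib_right
proof (rule sum.cong)
  fix i
  assume "i \<in> {..n}"
  then have "b ^ i * b ^ (n - i) = b ^ n" by (simp flip: power_add)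
  then show "of_nat (n choose i) * (of_int (c i) * b ^ i) * b ^ (n - i)
           = of_int (int (n choose i) * c i) * b ^ n"
    by (metis mult.assoc mult.commute of_int_mult of_int_of_nat_eq)
qed simp

lemma weakly_subintegral_of_int_coeffs:
  fixes b :: "'a::comm_ring_1"
  assumes "q \<ge> 1" and "c 0 = 1"
    and "\<And>i. i \<in> {1..2*q+1} \<Longrightarrow> of_int (c i) * b ^ i \<in> ideal_power I i"
    and "\<And>n. n \<in> {q+1..2*q+1} \<Longrightarrow> (\<Sum>i\<le>n. int (n choose i) * c i) = 0"
  shows "weakly_subintegral I b"
proof -
  define a where "a i = of_int (c i) * b ^ i" for i
  have "b ^ n + (\<Sum>i=1..n. of_nat (n choose i) * a i * b ^ (n - i)) = 0"
    if "n \<in> {q+1..2*q+1}" for n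
  proof -
    have "b ^ n + (\<Sum>i=1..n. of_nat (n choose i) * a i * b ^ (n - i))
        = (\<Sum>i\<le>n. of_nat (n choose i) * a i * b ^ (n - i))"
      using \<open>c 0 = 1\<close> by (simp add: a_def atMost_atLeast0 sum.atLeast_Suc_atMost)
    also have "\<dots> = 0"
      using assms(4)[OF that] by (simp add: a_def sum_binomial_scaled_powers)
    finally show ?thesis .
  qed
  then show ?thesis
    unfolding weakly_subintegral_def using assms(1) assms(3)[folded a_def] by blast
qed

fun binomial_killing_coeff :: "nat \<Rightarrow> nat \<Rightarrow> int" where
  "binomial_killing_coeff q n =
     (if n = 0 then 1 else if n \<le> q then 0
      else - (\<Sum>i<n. int (n choose i) * binomial_killing_coeff q i))"

declare binomial_killing_coeff.simps [simp del]

lemma binomial_killing_coeff_0: "binomial_killing_coeff q 0 = 1"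
  by (simp add: binomial_killing_coeff.simps)

lemma binomial_killing_coeff_eq_0: "0 < i \<Longrightarrow> i \<le> q \<Longrightarrow> binomial_killing_coeff q i = 0"
  by (simp add: binomial_killing_coeff.simps)

lemma binomial_sum_killing_coeff:
  assumes "q < n"
  shows "(\<Sum>i\<le>n. int (n choose i) * binomial_killing_coeff q i) = 0"
proof -
  have "(\<Sum>i\<le>n. int (n choose i) * binomial_killing_coeff q i)
      = (\<Sum>i<n. int (n choose i) * binomial_killing_coeff q i) + binomial_killing_coeff q n"
    by (simp flip: lessThan_Suc_atMost)
  also have "binomial_killing_coeff q n = - (\<Sum>i<n. int (n choose i) * binomial_killing_coeff q i)"
    using assms by (subst binomial_killing_coeff.simps) simp
  finally show ?thesis by simp
qed

theorem mainTheorem10: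
  fixes I :: "'a::comm_ring_1 set" and b :: 'a
  assumes "is_ideal I"
    and "\<exists>N. \<forall>n\<ge>N. n > 0 \<longrightarrow> b ^ n \<in> ideal_power I n"
  shows "b \<in> weak_subintegral_closure I"
proof -
  obtain N where N: "\<And>n. N \<le> n \<Longrightarrow> 0 < n \<Longrightarrow> b ^ n \<in> ideal_power I n"
    using assms(2) by blast
  define q where "q = max N 1"
  define c where "c = binomial_killing_coeff q"
  have "of_int (c i) * b ^ i \<in> ideal_power I i" if "i \<in> {1..2*q+1}" for i
  proof (cases "i \<le> q")
    case True
    then show ?thesis
      using that by (simp add: c_def binomial_killing_coeff_eq_0 zero_in_ideal_power)
  next
    case False
    then show ?thesis
      using N q_def by (auto intro: ideal_power_mult_left[OF assms(1)])
  qed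
  moreover have "(\<Sum>i\<le>n. int (n choose i) * c i) = 0" if "n \<in> {q+1..2*q+1}" for n
    using that by (simp add: c_def binomial_sum_killing_coeff)
  ultimately have "weakly_subintegral I b"
    by (intro weakly_subintegral_of_int_coeffs[of q c])
      (auto simp: q_def c_def binomial_killing_coeff_0)
  then show ?thesis by (simp add: weak_subintegral_closure_def)
qed

end
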